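(* Let $\mathcal{S}\subseteq\mathcal{X}\times\mathcal{Y}$ and $f:\mathcal{X}\times\mathcal{Y}\to\mathcal{V}$. For every $(Q_0,\dots,Q_{|\mathcal{Y}|-1})\in\mathcal{Q}_n^{|\mathcal{Y}|}$, the compatible hyperedge $e(Q_0,\dots,Q_{|\mathcal{Y}|-1})$ is solvable for $(\mathcal{S},f)$; furthermore there exists $\tilde e\in\mathcal{E}(\mathcal{S},f)$ with $e(Q_0,\dots,Q_{|\mathcal{Y}|-1})\subseteq\tilde e$.
   Context: Finite alphabets, $\mathcal{Y}=\{0,\dots,|\mathcal{Y}|-1\}$. $\mathcal{Q}_n=\mathcal{P}_n(\mathcal{V})$, the set of types of sequences in $\mathcal{V}^n$. A symbol $a\in\mathcal{X}$ is compatible with $(Q_0,\dots,Q_{|\mathcal{Y}|-1})$ if for all $b_1,b_2$ with $(a,b_1),(a,b_2)\in\mathcal{S}$: $nQ_{b_1}(v)-nQ_{b_2}(v)=\mathbf{1}[f(a,b_1)=v]-\mathbf{1}[f(a,b_2)=v]$ for all $v$; $e(Q_0,\dots,Q_{|\mathcal{Y}|-1})$ is the set of compatible symbols. For $\mathcal{A}\times\mathcal{B}\subseteq\mathcal{X}\times\mathcal{Y}$, a simple loop is a set $\{(a_0,b_0),(a_0,b_1),(a_1,b_1),\dots,(a_{k-1},b_{k-1}),(a_{k-1},b_0)\}\subseteq(\mathcal{A}\times\mathcal{B})\cap\mathcal{S}$ with the $a_i$ pairwise distinct and the $b_i$ pairwise distinct; with $\mathcal{I}_+(v)=\{i:f(a_i,b_i)=v\}$,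 $\mathcal{I}_-(v)=\{i:f(a_i,b_{i+1\bmod k})=v\}$, $\mathcal{A}\times\mathcal{B}$ is solvable for $(\mathcal{S},f)$ if every simple loop in it has $|\mathcal{I}_+(v)|=|\mathcal{I}_-(v)|$ for all $v$. $e\subseteq\mathcal{X}$ is solvable if $e\times\mathcal{Y}$ is solvable; $\mathcal{E}(\mathcal{S},f)$ is the set of inclusion-maximal solvable subsets of $\mathcal{X}$. *)

theory Defs
  imports Main "HOL-Library.Indicator_Function"
begin

definition types_n :: "nat \<Rightarrow> ('v::finite \<Rightarrow> real) set" where
  "types_n n = {Q. (\<forall>v. \<exists>k::nat. Q v = real k / real n) \<and> (\<Sum>v\<in>UNIV. Q v) = 1}"

text \<open>Compatible symbols e(Q_0,...,Q_{|Y|-1}); the tuple is indexed by the finite type 'y.\<close>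
definition compatible_edge ::
  "nat \<Rightarrow> ('x \<times> 'y) set \<Rightarrow> ('x \<Rightarrow> 'y \<Rightarrow> 'v) \<Rightarrow> ('y \<Rightarrow> 'v \<Rightarrow> real) \<Rightarrow> 'x set" where
  "compatible_edge n S f Q = {a. \<forall>b1 b2. (a, b1) \<in> S \<longrightarrow> (a, b2) \<in> S \<longrightarrow>
      (\<forall>v. real n * Q b1 v - real n * Q b2 v =
           indicator {v. f a b1 = v} v - indicator {v. f a b2 = v} v)}"

definition simple_loop ::
  "('x \<times> 'y) set \<Rightarrow> 'x set \<Rightarrow> 'y set \<Rightarrow> nat \<Rightarrow> (nat \<Rightarrow> 'x) \<Rightarrow> (nat \<Rightarrow> 'y) \<Rightarrow> bool" where
  "simple_loop S A B k a b \<longleftrightarrow> 2 \<le> k \<and> inj_on a {0..<k} \<and> inj_on b {0..<k} \<and>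
     (\<forall>i<k. (a i, b i) \<in> (A \<times> B) \<inter> S \<and> (a i, b ((i + 1) mod k)) \<in> (A \<times> B) \<inter> S)"

definition solvable_rect ::
  "('x \<times> 'y) set \<Rightarrow> ('x \<Rightarrow> 'y \<Rightarrow> 'v) \<Rightarrow> 'x set \<Rightarrow> 'y set \<Rightarrow> bool" where
  "solvable_rect S f A B \<longleftrightarrow> (\<forall>k a b. simple_loop S A B k a b \<longrightarrow>
     (\<forall>v. card {i. i < k \<and> f (a i) (b i) = v} = card {i. i < k \<and> f (a i) (b ((i + 1) mod k)) = v}))"

definition solvable_set :: "('x \<times> 'y) set \<Rightarrow> ('x \<Rightarrow> 'y \<Rightarrow> 'v) \<Rightarrow> 'x set \<Rightarrow> bool" where
  "solvable_set S f e \<longleftrightarrow> solvable_rect S f e UNIV"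

definition max_solvable :: "('x \<times> 'y) set \<Rightarrow> ('x \<Rightarrow> 'y \<Rightarrow> 'v) \<Rightarrow> 'x set set" where
  "max_solvable S f = {e. solvable_set S f e \<and> (\<forall>e'. solvable_set S f e' \<and> e \<subseteq> e' \<longrightarrow> e' = e)}"

end

theory Submission
  imports Defs
begin

text \<open>Compatibility of a symbol a says that n Q_b(v) - [f(a,b) = v] does not depend on b
  among the b with (a,b) \<in> S. Along a simple loop the difference of the two indicator counts
  at v therefore telescopes to the cyclic sum of n Q_{b_i}(v) - n Q_{b_{i+1}}(v), which
  vanishes. Maximal solvable supersets exist because a finite alphabet has only finitely many
  subsets.\<close>

lemma sum_lessThan_rotate:
  fixes h :: "nat \<Rightarrow> 'a::comm_monoid_add"
  shows "(\<Sum>i<k. h ((i + 1) mod k)) = (\<Sum>i<k. h i)"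
proof (cases k)
  case (Suc m)
  have "(\<Sum>i<m. h ((i + 1) mod Suc m)) = (\<Sum>i<m. h (Suc i))"
    by (rule sum.cong) auto
  then have "(\<Sum>i<Suc m. h ((i + 1) mod Suc m)) = (\<Sum>i<m. h (Suc i)) + h 0"
    by simp
  also have "\<dots> = (\<Sum>i<Suc m. h i)"
    by (simp only: sum.lessThan_Suc_shift add.commute)
  finally show ?thesis using Suc by simp
qed simp

lemma card_eq_if_cyclic_telescope:
  fixes g :: "nat \<Rightarrow> 'a::ring_char_0"
  assumes "\<And>i. i < k \<Longrightarrow> of_bool (P i) - of_bool (R i) = g i - g ((i + 1) mod k)"
  shows "card {i. i < k \<and> P i} = card {i. i < k \<and> R i}"
proof -
  have "(\<Sum>i<k. of_bool (P i) - of_bool (R i) :: 'a) = (\<Sum>i<k. g i - g ((i + 1) mod k))"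
    using assms by (intro sum.cong) auto
  also have "\<dots> = 0"
    by (simp only: sum_subtractf sum_lessThan_rotate diff_self)
  finally have "(of_nat (card ({..<k} \<inter> {i. P i})) :: 'a) = of_nat (card ({..<k} \<inter> {i. R i}))"
    by (simp add: sum_subtractf)
  moreover have "{..<k} \<inter> {i. X i} = {i. i < k \<and> X i}" for X by auto
  ultimately show ?thesis
    by simp
qed

lemma compatible_edge_solvable: "solvable_set S f (compatible_edge n S f Q)"
  unfolding solvable_set_def solvable_rect_def
proof (intro allI impI)
  fix k a b v
  assume loop: "simple_loop S (compatible_edge n S f Q) UNIV k a b"
  show "card {i. i < k \<and> f (a i) (b i) = v} = card {i. i < k \<and> f (a i) (b ((i + 1) mod k)) = v}"
  proof (rule card_eq_if_cyclic_telescope[where g = "\<lambda>i. real n * Q (b i) v"])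
    fix i assume "i < k"
    then have "a i \<in> compatible_edge n S f Q" "(a i, b i) \<in> S" "(a i, b ((i + 1) mod k)) \<in> S"
      using loop by (auto simp: simple_loop_def)
    then show "of_bool (f (a i) (b i) = v) - of_bool (f (a i) (b ((i + 1) mod k)) = v)
        = real n * Q (b i) v - real n * Q (b ((i + 1) mod k)) v"
      unfolding compatible_edge_def by (auto simp: indicator_def)
  qed
qed

lemma solvable_set_subset_max_solvable:
  fixes S :: "('x::finite \<times> 'y) set"
  assumes "solvable_set S f e"
  shows "\<exists>e' \<in> max_solvable S f. e \<subseteq> e'"
  using finite_has_maximal2[of "{e. solvable_set S f e}" e] assms
  by (auto simp: max_solvable_def)

theorem lemma3:
  fixes S :: "('x::finite \<times> 'y::finite) set"
    and f :: "'x \<Rightarrow> 'y \<Rightarrow> 'v::finite"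
    and n :: nat
    and Q :: "'y \<Rightarrow> 'v \<Rightarrow> real"
  assumes "\<forall>b. Q b \<in> types_n n"
  shows "solvable_set S f (compatible_edge n S f Q) \<and>
         (\<exists>e' \<in> max_solvable S f. compatible_edge n S f Q \<subseteq> e')"
  using compatible_edge_solvable by (intro conjI solvable_set_subset_max_solvable)

end
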